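(* Let $m\in\mathbb N$ and let $f:\mathbb R\to\mathbb R$ be a $2\pi$-periodic function of class $C^m$ with zero mean, $\int_0^{2\pi} f(t)\,dt=0$. Then: (a) $\displaystyle 0\le \sum_{k=0}^{m}\mathbf c_{m,k}\int_0^{2\pi} \big(f^{(k)}(t)\big)^2\,dt$, where $\mathbf c_{m,k}$ are the coefficients of the polynomial $Q_m(t):=\prod_{j=1}^{m}(t-j^2)=\sum_{k=0}^{m}\mathbf c_{m,k}t^k$. (b) $\displaystyle 0\le \sum_{k=0}^{m-1}\lambda_{m,k}\int_0^{2\pi}\Big[\big(f^{(k+1)}(t)\big)^2-\big(f^{(k)}(t)\big)^2\Big]dt$, where $\lambda_{m,k}$ are the coefficients of the polynomial $P_m(t)=\sum_{k=0}^{m-1}\lambda_{m,k}t^k$ defined by $P_1(t)=1$ and $P_m(t):=\prod_{j=2}^{m}(t-j^2)$ for $m\ge 2$. (c) If $m\ge 2$, $$0\le \prod_{j=2}^{m}(1-j^2)\int_0^{2\pi}\big[\dot f(t)^2-f(t)^2\big]dt+\sum_{k=1}^{m-1}S_{m,k}\int_0^{2\pi}\big(f^{(k+1)}(t)+f^{(k-1)}(t)\big)^2dt,$$ where $S_{m,1},\dots,S_{m,m-1}$ are the coefficients of the polynomial $\mathcal S_m(t):=\frac{P_m(t)-P_m(1)}{t-1}=\sum_{k=1}^{m-1}S_{m,k}t^{k-1}$. The inequalities in (a), (b), (c) are equivalent, and equality holds in them if and only if $f(t)=\sum_{n=1}^{m}\big(\alpha_n\cos(nt)+\beta_n\sin(nt)\big)$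 for some real constants $\alpha_n,\beta_n$.
   Context: $f^{(k)}$ denotes the $k$-th derivative of $f$; $\dot f=f'$. *)

theory Defs
  imports "HOL-Analysis.Analysis" "HOL-Computational_Algebra.Polynomial"
begin

definition C_m :: "nat \<Rightarrow> (real \<Rightarrow> real) \<Rightarrow> bool" where
  "C_m m f \<longleftrightarrow>
     (\<forall>k<m. \<forall>x. ((deriv ^^ k) f has_real_derivative (deriv ^^ Suc k) f x) (at x)) \<and>
     (\<forall>k\<le>m. continuous_on UNIV ((deriv ^^ k) f))"

definition Q_poly :: "nat \<Rightarrow> real poly" where
  "Q_poly m = (\<Prod>j\<in>{1..m}. [: - ((real j)^2), 1 :])"

definition P_poly :: "nat \<Rightarrow> real poly" where
  "P_poly m = (if m = 1 then 1 else (\<Prod>j\<in>{2..m}. [: - ((real j)^2), 1 :]))"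

definition S_poly :: "nat \<Rightarrow> real poly" where
  "S_poly m = (P_poly m - [:poly (P_poly m) 1:]) div [: -1, 1 :]"

end

theory Submission
  imports Defs "HOL-Library.Periodic_Fun"
begin

(* Let a_n, b_n be the Fourier coefficients of f over one period. Integration by parts shows
   that each derivative multiplies a_n^2 + b_n^2 by n^2, and f^(k+1) + f^(k-1) has coefficients
   (1 - n^2) times those of f^(k-1). By Parseval's identity each of the three expressions,
   times pi, is therefore the series of Q_m(n^2) (a_n^2 + b_n^2): for (b) since
   Q_m(t) = (t - 1) P_m(t), for (c) since moreover P_m(t) = P_m(1) + (t - 1) S_m(t).
   The term n = 0 vanishes because f has mean zero, and Q_m(n^2) is zero for 1 <= n <= m and
   positive for n > m. So the series is nonnegative, and it vanishes iff a_n = b_n = 0 for all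
   n > m, i.e. iff f is a trigonometric polynomial of degree at most m without constant term.
   Parseval's identity comes from Bessel's inequality together with the uniform density of
   trigonometric polynomials, which is Stone-Weierstrass on the unit circle. *)

section \<open>Periodic functions as functions on the circle\<close>

lemma periodic_cis_eq:
  assumes "periodic_fun_simple g (2*pi)" and "cis a = cis b"
  shows "g a = g b"
proof -
  interpret periodic_fun_simple g "2*pi" by fact
  have "sin a = sin b \<and> cos a = cos b"
    using arg_cong[OF assms(2), of Re] arg_cong[OF assms(2), of Im] by simp
  then obtain n :: int where "a = b + of_int n * (2*pi)"
    unfolding sin_cos_eq_iff by (auto simp: mult_ac)
  then show ?thesis using plus_of_int[of b n] by simp
qed

lemma cis_image_period: "cis ` {0..2*pi} = sphere 0 1"
proof
  show "sphere 0 1 \<subseteq> cis ` {0..2*pi}"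
  proof
    fix z :: complex assume "z \<in> sphere 0 1"
    then have "z = cis (Arg2pi z)"
      using Arg2pi[of z] by (simp add: is_Arg_def cis_conv_exp)
    then show "z \<in> cis ` {0..2*pi}" using Arg2pi[of z] by force
  qed
qed auto

text \<open>A periodic function is a function on the circle: \<open>cis\<close> is a closed map from
  \<open>[0, 2\<pi>]\<close> onto the circle, hence a quotient map.\<close>
lemma continuous_on_sphere_Arg:
  assumes per: "periodic_fun_simple g (2*pi)" and cont: "continuous_on UNIV g"
  shows "continuous_on (sphere 0 1) (\<lambda>z. g (Arg z))"
proof -
  have cis_cont: "continuous_map (top_of_set {0..2*pi}) (top_of_set (sphere 0 1)) cis"
    using cis_image_period by (simp add: continuous_on_cis image_subset_iff_funcset[symmetric])
  have "closed_map (top_of_set {0..2*pi}) (top_of_set (sphere 0 1)) cis"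
  proof (rule continuous_imp_closed_map_gen[OF _ _ cis_cont])
    show "compact_space (top_of_set {0..2*pi::real})"
      by (simp add: compact_space_subtopology)
    show "kc_space (top_of_set (sphere (0::complex) 1))"
      by (simp add: kc_space_subtopology kc_space_euclidean)
  qed
  then have quot: "quotient_map (top_of_set {0..2*pi}) (top_of_set (sphere 0 1)) cis"
    by (rule continuous_closed_imp_quotient_map[OF cis_cont])
      (simp only: topspace_euclidean_subtopology cis_image_period)
  have "continuous_on {0..2*pi} ((\<lambda>z. g (Arg z)) \<circ> cis)"
  proof (rule continuous_on_eq[OF continuous_on_subset[OF cont]])
    show "g t = ((\<lambda>z. g (Arg z)) \<circ> cis) t" for t
      using periodic_cis_eq[OF per, of t "Arg (cis t)"] by (simp add: cis_Arg)
  qed auto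
  then have "continuous_map (top_of_set (sphere 0 1)) euclidean (\<lambda>z. g (Arg z))"
    by (intro continuous_compose_quotient_map[OF quot]) simp
  then show ?thesis by simp
qed

section \<open>Integrals of harmonics over a period\<close>

lemma integrable_continuous_UNIV: "continuous_on UNIV g \<Longrightarrow> (g::real \<Rightarrow> real) integrable_on {a..b}"
  by (rule integrable_continuous_interval) (rule continuous_on_subset, auto)

lemma integral_cos_Ints:
  assumes "x \<in> \<int>"
  shows "integral {0..2*pi} (\<lambda>t. cos (x * t)) = (if x = 0 then 2*pi else 0)"
proof (cases "x = 0")
  case False
  have "((\<lambda>t. cos (x * t)) has_integral sin (x * (2*pi)) / x - sin (x * 0) / x) {0..2*pi}"
    by (rule fundamental_theorem_of_calculus)
      (use False in \<open>auto intro!: derivative_eq_intros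
         simp flip: has_real_derivative_iff_has_vector_derivative\<close>)
  moreover have "sin (x * (2*pi)) = 0"
    using sin_integer_2pi[OF assms] by (simp add: mult.commute)
  ultimately show ?thesis using False by (simp add: integral_unique)
qed simp

lemma integral_sin_Ints:
  assumes "x \<in> \<int>"
  shows "integral {0..2*pi} (\<lambda>t. sin (x * t)) = 0"
proof (cases "x = 0")
  case False
  have "((\<lambda>t. sin (x * t)) has_integral - cos (x * (2*pi)) / x - - cos (x * 0) / x) {0..2*pi}"
    by (rule fundamental_theorem_of_calculus)
      (use False in \<open>auto intro!: derivative_eq_intros
         simp flip: has_real_derivative_iff_has_vector_derivative\<close>)
  moreover have "cos (x * (2*pi)) = 1"
    using cos_integer_2pi[OF assms] by (simp add: mult.commute)
  ultimately show ?thesis by (simp add: integral_unique)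
qed simp

lemma integral_cos_times_cos:
  "integral {0..2*pi} (\<lambda>t. cos (real n * t) * cos (real k * t)) =
     pi * ((if n = k then 1 else 0) + (if n + k = 0 then 1 else 0))"
proof -
  have eq: "cos (real n * t) * cos (real k * t) =
          cos ((real n - real k) * t) / 2 + cos ((real n + real k) * t) / 2" for t
    by (simp add: cos_times_cos left_diff_distrib distrib_right add_divide_distrib)
  have "integral {0..2*pi} (\<lambda>t. cos (real n * t) * cos (real k * t)) =
      integral {0..2*pi} (\<lambda>t. cos ((real n - real k) * t)) / 2 +
      integral {0..2*pi} (\<lambda>t. cos ((real n + real k) * t)) / 2"
    unfolding eq by (subst integral_add) (auto intro!: integrable_continuous_UNIV continuous_intros)
  then show ?thesis by (simp add: integral_cos_Ints)
qed

lemma integral_sin_times_sin: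
  "integral {0..2*pi} (\<lambda>t. sin (real n * t) * sin (real k * t)) =
     pi * ((if n = k then 1 else 0) - (if n + k = 0 then 1 else 0))"
proof -
  have eq: "sin (real n * t) * sin (real k * t) =
          cos ((real n - real k) * t) / 2 - cos ((real n + real k) * t) / 2" for t
    by (simp add: sin_times_sin left_diff_distrib distrib_right diff_divide_distrib)
  have "integral {0..2*pi} (\<lambda>t. sin (real n * t) * sin (real k * t)) =
      integral {0..2*pi} (\<lambda>t. cos ((real n - real k) * t)) / 2 -
      integral {0..2*pi} (\<lambda>t. cos ((real n + real k) * t)) / 2"
    unfolding eq by (subst integral_diff) (auto intro!: integrable_continuous_UNIV continuous_intros)
  then show ?thesis by (simp add: integral_cos_Ints)
qed

lemma integral_sin_times_cos:
  "integral {0..2*pi} (\<lambda>t. sin (real n * t) * cos (real k * t)) = 0"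
proof -
  have eq: "sin (real n * t) * cos (real k * t) =
          sin ((real n + real k) * t) / 2 + sin ((real n - real k) * t) / 2" for t
    by (simp add: sin_times_cos left_diff_distrib distrib_right add_divide_distrib)
  have "integral {0..2*pi} (\<lambda>t. sin (real n * t) * cos (real k * t)) =
      integral {0..2*pi} (\<lambda>t. sin ((real n + real k) * t)) / 2 +
      integral {0..2*pi} (\<lambda>t. sin ((real n - real k) * t)) / 2"
    unfolding eq by (subst integral_add) (auto intro!: integrable_continuous_UNIV continuous_intros)
  then show ?thesis by (simp add: integral_sin_Ints)
qed

lemma integral_cos_times_sin:
  "integral {0..2*pi} (\<lambda>t. cos (real n * t) * sin (real k * t)) = 0"
  using integral_sin_times_cos[of k n] by (simp add: mult.commute)

section \<open>Density of trigonometric polynomials\<close>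

definition trig_poly :: "nat \<Rightarrow> (nat \<Rightarrow> real) \<Rightarrow> (nat \<Rightarrow> real) \<Rightarrow> real \<Rightarrow> real" where
  "trig_poly N a b t = (\<Sum>n\<le>N. a n * cos (real n * t) + b n * sin (real n * t))"

definition is_trig_poly :: "(real \<Rightarrow> real) \<Rightarrow> bool" where
  "is_trig_poly P \<longleftrightarrow> (\<exists>N a b. P = trig_poly N a b)"

lemma trig_poly_extend:
  assumes "N \<le> M"
  shows "trig_poly N a b =
           trig_poly M (\<lambda>n. if n \<le> N then a n else 0) (\<lambda>n. if n \<le> N then b n else 0)"
  unfolding trig_poly_def by (intro ext sum.mono_neutral_cong_left) (use assms in auto)

lemma trig_poly_add:
  "trig_poly N a b t + trig_poly N c d t = trig_poly N (\<lambda>n. a n + c n) (\<lambda>n. b n + d n) t"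
  by (simp add: trig_poly_def sum.distrib[symmetric] algebra_simps)

lemma is_trig_poly_add:
  assumes "is_trig_poly P" "is_trig_poly Q"
  shows "is_trig_poly (\<lambda>t. P t + Q t)"
proof -
  obtain N a b M c d where "P = trig_poly N a b" "Q = trig_poly M c d"
    using assms unfolding is_trig_poly_def by blast
  then have PQ: "P = trig_poly (max N M) (\<lambda>n. if n \<le> N then a n else 0) (\<lambda>n. if n \<le> N then b n else 0)"
    "Q = trig_poly (max N M) (\<lambda>n. if n \<le> M then c n else 0) (\<lambda>n. if n \<le> M then d n else 0)"
    by (simp_all add: trig_poly_extend)
  then show ?thesis
    unfolding is_trig_poly_def PQ trig_poly_add by blast
qed

lemma is_trig_poly_sum:
  "finite I \<Longrightarrow> (\<And>i. i \<in> I \<Longrightarrow> is_trig_poly (P i)) \<Longrightarrow> is_trig_poly (\<lambda>t. \<Sum>i\<in>I. P i t)"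
proof (induction I rule: finite_induct)
  case empty
  have "(\<lambda>t. 0) = trig_poly 0 (\<lambda>_. 0) (\<lambda>_. 0)" by (simp add: trig_poly_def fun_eq_iff)
  then show ?case by (auto simp: is_trig_poly_def)
qed (auto intro: is_trig_poly_add)

lemma is_trig_poly_cos_sin:
  assumes "x \<in> \<int>"
  shows "is_trig_poly (\<lambda>t. c * cos (x * t) + d * sin (x * t))"
proof -
  obtain z :: int where "x = of_int z"
    using assms by (auto elim: Ints_cases)
  then obtain N :: nat where N: "real N = \<bar>x\<bar>"
    by (metis of_int_abs of_nat_nat abs_ge_zero)
  have "c * cos (x * t) + d * sin (x * t) =
          trig_poly N (\<lambda>n. if n = N then c else 0) (\<lambda>n. if n = N then sgn x * d else 0) t" for t
  proof -
    have "c * cos (x * t) + d * sin (x * t) = c * cos (real N * t) + sgn x * d * sin (real N * t)"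
      unfolding N by (cases "x \<ge> 0") (auto simp: abs_if sgn_if)
    also have "\<dots> = trig_poly N (\<lambda>n. if n = N then c else 0) (\<lambda>n. if n = N then sgn x * d else 0) t"
      by (simp add: trig_poly_def sum.distrib if_distrib[where f = "\<lambda>u. u * v" for v] cong: if_cong)
    finally show ?thesis .
  qed
  then show ?thesis
    unfolding is_trig_poly_def fun_eq_iff by blast
qed

lemma is_trig_poly_harmonic_mult:
  "is_trig_poly (\<lambda>t. (a * cos (real k * t) + b * sin (real k * t)) *
                      (c * cos (real n * t) + d * sin (real n * t)))"
proof -
  have "is_trig_poly (\<lambda>t. ((a * c + b * d) / 2 * cos ((real k - real n) * t) +
                            (b * c - a * d) / 2 * sin ((real k - real n) * t)) +
                           ((a * c - b * d) / 2 * cos ((real k + real n) * t) +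
                            (a * d + b * c) / 2 * sin ((real k + real n) * t)))"
    by (intro is_trig_poly_add is_trig_poly_cos_sin) auto
  moreover have "((a * c + b * d) / 2 * cos ((real k - real n) * t) +
                   (b * c - a * d) / 2 * sin ((real k - real n) * t)) +
                  ((a * c - b * d) / 2 * cos ((real k + real n) * t) +
                   (a * d + b * c) / 2 * sin ((real k + real n) * t)) =
                 (a * cos (real k * t) + b * sin (real k * t)) *
                 (c * cos (real n * t) + d * sin (real n * t))" for t
    by (simp add: left_diff_distrib distrib_right cos_diff sin_diff cos_add sin_add)
      (simp add: field_simps)
  ultimately show ?thesis by simp
qed

lemma is_trig_poly_mult:
  assumes "is_trig_poly P" "is_trig_poly Q"
  shows "is_trig_poly (\<lambda>t. P t * Q t)"
proof -
  obtain N a b M c d where "P = trig_poly N a b" "Q = trig_poly M c d"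
    using assms unfolding is_trig_poly_def by blast
  then have "(\<lambda>t. P t * Q t) = (\<lambda>t. \<Sum>k\<le>N. \<Sum>n\<le>M. (a k * cos (real k * t) + b k * sin (real k * t)) *
                                              (c n * cos (real n * t) + d n * sin (real n * t)))"
    by (simp add: fun_eq_iff trig_poly_def sum_product)
  then show ?thesis
    by (simp add: is_trig_poly_sum is_trig_poly_harmonic_mult)
qed

lemma is_trig_poly_poly_cis:
  assumes "real_polynomial_function p"
  shows "is_trig_poly (\<lambda>t. p (cis t))"
  using assms
proof (induction p rule: real_polynomial_function.induct)
  case (linear l)
  interpret bounded_linear l by fact
  have "cis t = cos t *\<^sub>R 1 + sin t *\<^sub>R \<i>" for t
    by (simp add: complex_eq_iff)
  then have "l (cis t) = l 1 * cos (1 * t) + l \<i> * sin (1 * t)" for t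
    by (simp add: add scale)
  then show ?case using is_trig_poly_cos_sin[of 1 "l 1" "l \<i>"] by simp
next
  case (const c)
  show ?case using is_trig_poly_cos_sin[of 0 c 0] by simp
qed (simp_all add: is_trig_poly_add is_trig_poly_mult)

lemma trig_poly_dense:
  assumes per: "periodic_fun_simple g (2*pi)" and cont: "continuous_on UNIV g" and "e > 0"
  obtains N a b where "\<And>t. \<bar>g t - trig_poly N a b t\<bar> < e"
proof -
  obtain p where p: "real_polynomial_function p" "\<And>z. z \<in> sphere 0 1 \<Longrightarrow> \<bar>g (Arg z) - p z\<bar> < e"
    using Stone_Weierstrass_real_polynomial_function[OF compact_sphere
        continuous_on_sphere_Arg[OF per cont] \<open>e > 0\<close>] by blast
  have approx: "\<bar>g t - p (cis t)\<bar> < e" for t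
    using p(2)[of "cis t"] periodic_cis_eq[OF per, of t "Arg (cis t)"] by (simp add: cis_Arg)
  obtain N a b where "(\<lambda>t. p (cis t)) = trig_poly N a b"
    using is_trig_poly_poly_cis[OF p(1)] unfolding is_trig_poly_def by blast
  then show ?thesis
    using that approx by metis
qed

section \<open>Fourier coefficients and Parseval's identity\<close>

definition fourier_cos :: "(real \<Rightarrow> real) \<Rightarrow> nat \<Rightarrow> real" where
  "fourier_cos g n = integral {0..2*pi} (\<lambda>t. g t * cos (real n * t))"

definition fourier_sin :: "(real \<Rightarrow> real) \<Rightarrow> nat \<Rightarrow> real" where
  "fourier_sin g n = integral {0..2*pi} (\<lambda>t. g t * sin (real n * t))"

definition fourier_sq :: "(real \<Rightarrow> real) \<Rightarrow> nat \<Rightarrow> real" where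
  "fourier_sq g n = (fourier_cos g n)^2 + (fourier_sin g n)^2"

lemma fourier_cos_0: "fourier_cos g 0 = integral {0..2*pi} g"
  by (simp add: fourier_cos_def)

lemma fourier_sin_0: "fourier_sin g 0 = 0"
  by (simp add: fourier_sin_def)

lemma fourier_sq_nonneg: "0 \<le> fourier_sq g n"
  by (simp add: fourier_sq_def)

lemma fourier_sq_0: "fourier_sq g 0 = (integral {0..2*pi} g)^2"
  by (simp add: fourier_sq_def fourier_cos_0 fourier_sin_0)

lemma fourier_cos_add:
  "continuous_on UNIV g \<Longrightarrow> continuous_on UNIV h \<Longrightarrow>
     fourier_cos (\<lambda>t. g t + h t) n = fourier_cos g n + fourier_cos h n"
  unfolding fourier_cos_def distrib_right
  by (subst integral_add) (auto intro!: integrable_continuous_UNIV continuous_intros)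

lemma fourier_sin_add:
  "continuous_on UNIV g \<Longrightarrow> continuous_on UNIV h \<Longrightarrow>
     fourier_sin (\<lambda>t. g t + h t) n = fourier_sin g n + fourier_sin h n"
  unfolding fourier_sin_def distrib_right
  by (subst integral_add) (auto intro!: integrable_continuous_UNIV continuous_intros)

lemma fourier_cos_diff:
  "continuous_on UNIV g \<Longrightarrow> continuous_on UNIV h \<Longrightarrow>
     fourier_cos (\<lambda>t. g t - h t) n = fourier_cos g n - fourier_cos h n"
  unfolding fourier_cos_def left_diff_distrib
  by (subst integral_diff) (auto intro!: integrable_continuous_UNIV continuous_intros)

lemma fourier_sin_diff:
  "continuous_on UNIV g \<Longrightarrow> continuous_on UNIV h \<Longrightarrow>
     fourier_sin (\<lambda>t. g t - h t) n = fourier_sin g n - fourier_sin h n"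
  unfolding fourier_sin_def left_diff_distrib
  by (subst integral_diff) (auto intro!: integrable_continuous_UNIV continuous_intros)

lemma continuous_on_trig_poly: "continuous_on UNIV (trig_poly N a b)"
  unfolding trig_poly_def by (intro continuous_intros)

lemma periodic_trig_poly: "periodic_fun_simple (trig_poly N a b) (2*pi)"
proof
  fix t
  have "real n * (t + 2*pi) = real n * t + 2 * pi * real n" for n
    by (simp add: algebra_simps)
  then show "trig_poly N a b (t + 2*pi) = trig_poly N a b t"
    by (simp add: trig_poly_def sin_add cos_add sin_integer_2pi cos_integer_2pi)
qed

lemma integral_mult_trig_poly:
  assumes "continuous_on UNIV h"
  shows "integral {0..2*pi} (\<lambda>t. h t * trig_poly N a b t) =
           (\<Sum>n\<le>N. a n * fourier_cos h n + b n * fourier_sin h n)"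
proof -
  have "h t * trig_poly N a b t =
          (\<Sum>n\<le>N. a n * (h t * cos (real n * t)) + b n * (h t * sin (real n * t)))" for t
    by (simp add: trig_poly_def sum_distrib_left algebra_simps)
  then show ?thesis
    using assms
    by (simp add: integral_sum integral_add integrable_continuous_UNIV continuous_intros
        fourier_cos_def fourier_sin_def)
qed

lemma fourier_cos_trig_poly:
  "fourier_cos (trig_poly N a b) n = pi * ((if n \<le> N then a n else 0) + (if n = 0 then a 0 else 0))"
proof -
  have "fourier_cos (trig_poly N a b) n = integral {0..2*pi} (\<lambda>t. cos (real n * t) * trig_poly N a b t)"
    by (simp add: fourier_cos_def mult.commute)
  also have "\<dots> = (\<Sum>j\<le>N. a j * fourier_cos (\<lambda>t. cos (real n * t)) j +
                             b j * fourier_sin (\<lambda>t. cos (real n * t)) j)"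
    by (intro integral_mult_trig_poly continuous_intros)
  also have "\<dots> = (\<Sum>j\<le>N. (if j = n then pi * a n else 0) + (if j = 0 \<and> n = 0 then pi * a 0 else 0))"
    by (intro sum.cong) (auto simp: fourier_cos_def fourier_sin_def integral_cos_times_cos
        integral_cos_times_sin)
  also have "\<dots> = pi * ((if n \<le> N then a n else 0) + (if n = 0 then a 0 else 0))"
    by (simp add: sum.distrib)
  finally show ?thesis .
qed

lemma fourier_sin_trig_poly:
  "fourier_sin (trig_poly N a b) n = pi * ((if n \<le> N then b n else 0) - (if n = 0 then b 0 else 0))"
proof -
  have "fourier_sin (trig_poly N a b) n = integral {0..2*pi} (\<lambda>t. sin (real n * t) * trig_poly N a b t)"
    by (simp add: fourier_sin_def mult.commute)
  also have "\<dots> = (\<Sum>j\<le>N. a j * fourier_cos (\<lambda>t. sin (real n * t)) j +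
                             b j * fourier_sin (\<lambda>t. sin (real n * t)) j)"
    by (intro integral_mult_trig_poly continuous_intros)
  also have "\<dots> = (\<Sum>j\<le>N. (if j = n then pi * b n else 0) - (if j = 0 \<and> n = 0 then pi * b 0 else 0))"
    by (intro sum.cong) (auto simp: fourier_cos_def fourier_sin_def integral_sin_times_sin
        integral_sin_times_cos)
  also have "\<dots> = pi * ((if n \<le> N then b n else 0) - (if n = 0 then b 0 else 0))"
    by (simp add: sum_subtractf)
  finally show ?thesis .
qed

lemma integral_sq_diff_trig_poly:
  assumes g: "continuous_on UNIV g"
  shows "integral {0..2*pi} (\<lambda>t. (g t - trig_poly N a b t)^2) =
           integral {0..2*pi} (\<lambda>t. (g t)^2)
           - 2 * (\<Sum>n\<le>N. a n * fourier_cos g n + b n * fourier_sin g n)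
           + pi * ((\<Sum>n\<le>N. (a n)^2 + (b n)^2) + (a 0)^2 - (b 0)^2)"
proof -
  let ?T = "trig_poly N a b"
  have T: "continuous_on UNIV ?T" by (rule continuous_on_trig_poly)
  have "(g t - ?T t)^2 = ((g t)^2 - 2 * (g t * ?T t)) + ?T t * ?T t" for t
    by (simp add: power2_eq_square algebra_simps)
  then have "integral {0..2*pi} (\<lambda>t. (g t - ?T t)^2) =
      integral {0..2*pi} (\<lambda>t. (g t)^2) - 2 * integral {0..2*pi} (\<lambda>t. g t * ?T t)
      + integral {0..2*pi} (\<lambda>t. ?T t * ?T t)"
    by (simp add: integral_add integral_diff integrable_continuous_UNIV continuous_intros g T)
  also have "integral {0..2*pi} (\<lambda>t. g t * ?T t) = (\<Sum>n\<le>N. a n * fourier_cos g n + b n * fourier_sin g n)"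
    by (rule integral_mult_trig_poly[OF g])
  also have "integral {0..2*pi} (\<lambda>t. ?T t * ?T t) =
               (\<Sum>n\<le>N. a n * fourier_cos ?T n + b n * fourier_sin ?T n)"
    by (rule integral_mult_trig_poly[OF T])
  also have "\<dots> = (\<Sum>n\<le>N. pi * ((a n)^2 + (b n)^2) + (if n = 0 then pi * ((a 0)^2 - (b 0)^2) else 0))"
    by (intro sum.cong) (auto simp: fourier_cos_trig_poly fourier_sin_trig_poly power2_eq_square algebra_simps)
  also have "\<dots> = pi * ((\<Sum>n\<le>N. (a n)^2 + (b n)^2) + (a 0)^2 - (b 0)^2)"
    by (simp add: sum.distrib sum_distrib_left algebra_simps)
  finally show ?thesis .
qed

lemma bessel_identity:
  assumes g: "continuous_on UNIV g" and mean: "integral {0..2*pi} g = 0"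
  shows "pi * integral {0..2*pi} (\<lambda>t. (g t - trig_poly N a b t)^2) =
           pi * integral {0..2*pi} (\<lambda>t. (g t)^2) - (\<Sum>n\<le>N. fourier_sq g n)
           + (\<Sum>n\<le>N. (pi * a n - fourier_cos g n)^2 + (pi * b n - fourier_sin g n)^2)
           + pi^2 * ((a 0)^2 - (b 0)^2)"
proof -
  have "(\<Sum>n\<le>N. (pi * a n - fourier_cos g n)^2 + (pi * b n - fourier_sin g n)^2) =
          pi^2 * (\<Sum>n\<le>N. (a n)^2 + (b n)^2)
          - 2 * pi * (\<Sum>n\<le>N. a n * fourier_cos g n + b n * fourier_sin g n)
          + (\<Sum>n\<le>N. fourier_sq g n)"
    by (simp add: fourier_sq_def power2_diff power_mult_distrib sum.distrib sum_subtractf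
        sum_distrib_left algebra_simps)
  then show ?thesis
    unfolding integral_sq_diff_trig_poly[OF g] by (simp add: power2_eq_square algebra_simps)
qed

lemma bessel_partial_sum:
  assumes g: "continuous_on UNIV g" and mean: "integral {0..2*pi} g = 0"
  shows "pi * integral {0..2*pi}
             (\<lambda>t. (g t - trig_poly N (\<lambda>n. fourier_cos g n / pi) (\<lambda>n. fourier_sin g n / pi) t)^2)
           = pi * integral {0..2*pi} (\<lambda>t. (g t)^2) - (\<Sum>n\<le>N. fourier_sq g n)"
  using mean by (simp add: bessel_identity[OF g mean] fourier_cos_0 fourier_sin_0)

lemma bessel_approx:
  assumes g: "continuous_on UNIV g" and mean: "integral {0..2*pi} g = 0"
  shows "pi * integral {0..2*pi} (\<lambda>t. (g t)^2) - (\<Sum>n\<le>N. fourier_sq g n)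
           \<le> pi * integral {0..2*pi} (\<lambda>t. (g t - trig_poly N a b t)^2)"
proof -
  let ?d = "\<lambda>n. (pi * a n - fourier_cos g n)^2 + (pi * b n - fourier_sin g n)^2"
  have "?d 0 \<le> (\<Sum>n\<le>N. ?d n)"
    by (rule member_le_sum) auto
  moreover have "?d 0 = pi^2 * (a 0)^2 + pi^2 * (b 0)^2"
    using mean by (simp add: fourier_cos_0 fourier_sin_0 power_mult_distrib)
  ultimately have "0 \<le> (\<Sum>n\<le>N. ?d n) + pi^2 * ((a 0)^2 - (b 0)^2)"
    by (simp add: algebra_simps) (smt (verit) zero_le_power2 mult_nonneg_nonneg)
  then show ?thesis
    unfolding bessel_identity[OF g mean] by linarith
qed

theorem parseval:
  assumes per: "periodic_fun_simple g (2*pi)" and g: "continuous_on UNIV g"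
    and mean: "integral {0..2*pi} g = 0"
  shows "fourier_sq g sums (pi * integral {0..2*pi} (\<lambda>t. (g t)^2))"
proof -
  define I where "I = pi * integral {0..2*pi} (\<lambda>t. (g t)^2)"
  have sq_integrable: "(\<lambda>t. (h t)^2) integrable_on {0..2*pi}" if "continuous_on UNIV h" for h :: "real \<Rightarrow> real"
    by (rule integrable_continuous_UNIV) (use that in \<open>intro continuous_intros\<close>)
  have bessel: "(\<Sum>n<N. fourier_sq g n) \<le> I" for N
  proof -
    have "0 \<le> pi * integral {0..2*pi} (\<lambda>t. (g t - trig_poly N (\<lambda>n. fourier_cos g n / pi)
                                                              (\<lambda>n. fourier_sin g n / pi) t)^2)"
      by (intro mult_nonneg_nonneg integral_nonneg sq_integrable continuous_intros g
          continuous_on_trig_poly) auto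
    then have "(\<Sum>n\<le>N. fourier_sq g n) \<le> I"
      unfolding bessel_partial_sum[OF g mean] I_def by linarith
    moreover have "(\<Sum>n<N. fourier_sq g n) \<le> (\<Sum>n\<le>N. fourier_sq g n)"
      by (intro sum_mono2) (auto simp: fourier_sq_nonneg)
    ultimately show ?thesis by linarith
  qed
  have summable: "summable (fourier_sq g)"
    by (rule summableI_nonneg_bounded[OF fourier_sq_nonneg bessel])
  have "suminf (fourier_sq g) \<le> I"
    by (rule suminf_le_const[OF summable bessel])
  moreover have "I \<le> suminf (fourier_sq g)"
  proof (rule field_le_epsilon)
    fix d :: real assume "0 < d"
    define e where "e = sqrt (d / (2 * pi^2))"
    have "0 < e" "2 * pi^2 * e^2 = d"
      unfolding e_def using \<open>0 < d\<close> by simp_all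
    then obtain N a b where approx: "\<And>t. \<bar>g t - trig_poly N a b t\<bar> < e"
      using trig_poly_dense[OF per g] by blast
    have "I - (\<Sum>n\<le>N. fourier_sq g n) \<le> pi * integral {0..2*pi} (\<lambda>t. (g t - trig_poly N a b t)^2)"
      unfolding I_def by (rule bessel_approx[OF g mean])
    also have "\<dots> \<le> pi * integral {0..2*pi} (\<lambda>t. e^2)"
    proof (intro mult_left_mono integral_le)
      show "(g t - trig_poly N a b t)^2 \<le> e^2" for t
        using approx[of t] \<open>0 < e\<close> by (simp add: abs_le_square_iff[symmetric])
    qed (auto intro!: sq_integrable continuous_intros g continuous_on_trig_poly)
    also have "\<dots> = d" using \<open>2 * pi^2 * e^2 = d\<close> by (simp add: power2_eq_square mult_ac)
    finally have "I \<le> (\<Sum>n\<le>N. fourier_sq g n) + d" by simp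
    also have "(\<Sum>n\<le>N. fourier_sq g n) \<le> suminf (fourier_sq g)"
      by (rule sum_le_suminf[OF summable]) (auto simp: fourier_sq_nonneg)
    finally show "I \<le> suminf (fourier_sq g) + d" by simp
  qed
  ultimately show ?thesis
    using summable unfolding I_def by (simp add: summable_sums_iff antisym)
qed

lemma eq_0_if_fourier_sq_eq_0:
  assumes per: "periodic_fun_simple g (2*pi)" and g: "continuous_on UNIV g"
    and zero: "\<And>n. fourier_sq g n = 0"
  shows "g t = 0"
proof -
  have mean: "integral {0..2*pi} g = 0"
    using zero[of 0] by (simp add: fourier_sq_0)
  have "fourier_sq g = (\<lambda>_. 0)"
    using zero by auto
  then have "(\<lambda>_. 0) sums (pi * integral {0..2*pi} (\<lambda>t. (g t)^2))"
    using parseval[OF per g mean] by simp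
  then have "integral {0..2*pi} (\<lambda>t. (g t)^2) = 0"
    using sums_zero sums_unique2 by fastforce
  then have "\<forall>s\<in>{0..2*pi}. (g s)^2 = 0"
    using integral_eq_0_iff[of 0 "2*pi" "\<lambda>t. (g t)^2"] g
    by (auto intro!: continuous_intros intro: continuous_on_subset)
  moreover have "g t = g (Arg2pi (cis t))"
    by (rule periodic_cis_eq[OF per]) (use Arg2pi[of "cis t"] in \<open>simp add: is_Arg_def cis_conv_exp\<close>)
  moreover have "Arg2pi (cis t) \<in> {0..2*pi}"
    using Arg2pi[of "cis t"] by simp
  ultimately show ?thesis by simp
qed

lemma trig_poly_split_0:
  "trig_poly N a b t = a 0 + (\<Sum>n=1..N. a n * cos (real n * t) + b n * sin (real n * t))"
  by (simp add: trig_poly_def atMost_atLeast0 sum.atLeast_Suc_atMost)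

lemma fourier_sq_eq_0_iff: "fourier_sq g n = 0 \<longleftrightarrow> fourier_cos g n = 0 \<and> fourier_sin g n = 0"
  by (simp add: fourier_sq_def add_nonneg_eq_0_iff)

lemma harmonics_upto_iff_fourier_sq_eq_0:
  assumes per: "periodic_fun_simple g (2*pi)" and g: "continuous_on UNIV g"
    and mean: "integral {0..2*pi} g = 0"
  shows "(\<exists>\<alpha> \<beta> :: nat \<Rightarrow> real. \<forall>t. g t = (\<Sum>n=1..m. \<alpha> n * cos (real n * t) + \<beta> n * sin (real n * t)))
           \<longleftrightarrow> (\<forall>n>m. fourier_sq g n = 0)"
proof
  assume "\<exists>\<alpha> \<beta> :: nat \<Rightarrow> real. \<forall>t. g t = (\<Sum>n=1..m. \<alpha> n * cos (real n * t) + \<beta> n * sin (real n * t))"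
  then obtain \<alpha> \<beta> :: "nat \<Rightarrow> real"
    where "\<And>t. g t = (\<Sum>n=1..m. \<alpha> n * cos (real n * t) + \<beta> n * sin (real n * t))"
    by blast
  then have "g = trig_poly m (\<alpha>(0 := 0)) \<beta>"
    by (auto simp: fun_eq_iff trig_poly_split_0 intro!: sum.cong)
  then show "\<forall>n>m. fourier_sq g n = 0"
    by (simp add: fourier_sq_def fourier_cos_trig_poly fourier_sin_trig_poly)
next
  assume high: "\<forall>n>m. fourier_sq g n = 0"
  let ?T = "trig_poly m (\<lambda>n. fourier_cos g n / pi) (\<lambda>n. fourier_sin g n / pi)"
  have T: "continuous_on UNIV ?T" by (rule continuous_on_trig_poly)
  have "g t - ?T t = 0" for t
  proof (rule eq_0_if_fourier_sq_eq_0[where g = "\<lambda>t. g t - ?T t"])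
    show "periodic_fun_simple (\<lambda>t. g t - ?T t) (2*pi)"
      using per periodic_trig_poly by (simp add: periodic_fun_simple_def)
    show "continuous_on UNIV (\<lambda>t. g t - ?T t)"
      by (intro continuous_intros g T)
    show "fourier_sq (\<lambda>t. g t - ?T t) n = 0" for n
      using high[rule_format, of n] mean
      by (cases "n \<le> m")
        (auto simp: fourier_sq_eq_0_iff fourier_cos_diff fourier_sin_diff g T
          fourier_cos_trig_poly fourier_sin_trig_poly fourier_cos_0 fourier_sin_0)
  qed
  then have "g t = (\<Sum>n=1..m. fourier_cos g n / pi * cos (real n * t) + fourier_sin g n / pi * sin (real n * t))"
    for t
    using mean by (simp add: trig_poly_split_0 fourier_cos_0)
  then show "\<exists>\<alpha> \<beta> :: nat \<Rightarrow> real. \<forall>t. g t = (\<Sum>n=1..m. \<alpha> n * cos (real n * t) + \<beta> n * sin (real n * t))"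
    by (intro exI[of _ "\<lambda>n. fourier_cos g n / pi"] exI[of _ "\<lambda>n. fourier_sin g n / pi"] allI)
qed

section \<open>Fourier coefficients of derivatives\<close>

lemma integral_by_parts_periodic:
  assumes g: "\<And>t. (g has_real_derivative g' t) (at t)" and h: "\<And>t. (h has_real_derivative h' t) (at t)"
    and g': "continuous_on UNIV g'" and h': "continuous_on UNIV h'"
    and ends: "g (2*pi) * h (2*pi) = g 0 * h 0"
  shows "integral {0..2*pi} (\<lambda>t. g' t * h t) = - integral {0..2*pi} (\<lambda>t. h' t * g t)"
proof -
  have "continuous_on UNIV g" "continuous_on UNIV h"
    using g h by (auto intro!: continuous_at_imp_continuous_on DERIV_isCont)
  then have integrable: "(\<lambda>t. g' t * h t) integrable_on {0..2*pi}" "(\<lambda>t. h' t * g t) integrable_on {0..2*pi}"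
    by (auto intro!: integrable_continuous_UNIV continuous_intros g' h')
  have "((\<lambda>t. g' t * h t + h' t * g t) has_integral g (2*pi) * h (2*pi) - g 0 * h 0) {0..2*pi}"
    by (rule fundamental_theorem_of_calculus)
      (auto intro!: DERIV_mult g h simp flip: has_real_derivative_iff_has_vector_derivative
        intro: has_field_derivative_at_within)
  then have "integral {0..2*pi} (\<lambda>t. g' t * h t + h' t * g t) = 0"
    using ends by (simp add: integral_unique)
  then show ?thesis
    using integrable by (simp add: integral_add eq_neg_iff_add_eq_0)
qed

lemma
  assumes per: "periodic_fun_simple g (2*pi)"
    and g: "\<And>t. (g has_real_derivative g' t) (at t)" and g': "continuous_on UNIV g'"
  shows fourier_cos_deriv: "fourier_cos g' n = real n * fourier_sin g n"
    and fourier_sin_deriv: "fourier_sin g' n = - real n * fourier_cos g n"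
proof -
  have ends: "g (2*pi) = g 0"
    using periodic_fun_simple.plus_period[OF per, of 0] by simp
  have ends_cos: "cos (real n * (2*pi)) = 1" and ends_sin: "sin (real n * (2*pi)) = 0"
    using cos_integer_2pi[of "real n"] sin_integer_2pi[of "real n"] by (simp_all add: mult.commute)
  have "((\<lambda>t. cos (real n * t)) has_real_derivative - real n * sin (real n * t)) (at t)"
    for t by (auto intro!: derivative_eq_intros)
  then have "fourier_cos g' n = - integral {0..2*pi} (\<lambda>t. - real n * sin (real n * t) * g t)"
    unfolding fourier_cos_def
    by (rule integral_by_parts_periodic[OF g _ g']) (auto intro!: continuous_intros simp: ends ends_cos)
  moreover have "((\<lambda>t. sin (real n * t)) has_real_derivative real n * cos (real n * t)) (at t)"
    for t by (auto intro!: derivative_eq_intros)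
  then have "fourier_sin g' n = - integral {0..2*pi} (\<lambda>t. real n * cos (real n * t) * g t)"
    unfolding fourier_sin_def
    by (rule integral_by_parts_periodic[OF g _ g']) (auto intro!: continuous_intros simp: ends_sin)
  ultimately show "fourier_cos g' n = real n * fourier_sin g n"
    "fourier_sin g' n = - real n * fourier_cos g n"
    by (simp_all add: fourier_cos_def fourier_sin_def mult.assoc mult.commute[of _ "g t" for t]
        mult.left_commute[of "g t" for t])
qed

lemma fourier_sq_deriv:
  assumes "periodic_fun_simple g (2*pi)"
    and "\<And>t. (g has_real_derivative g' t) (at t)" and "continuous_on UNIV g'"
  shows "fourier_sq g' n = (real n)^2 * fourier_sq g n"
  using assms by (simp add: fourier_sq_def fourier_cos_deriv fourier_sin_deriv power_mult_distrib
      algebra_simps)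

section \<open>The polynomials \<open>Q_poly\<close>, \<open>P_poly\<close>, \<open>S_poly\<close>\<close>

lemma poly_as_sum_upto:
  fixes p :: "'a::comm_semiring_1 poly"
  assumes "degree p \<le> M"
  shows "poly p x = (\<Sum>k=0..M. coeff p k * x^k)"
proof -
  have "poly p x = (\<Sum>k\<le>degree p. coeff p k * x^k)" by (rule poly_altdef)
  also have "\<dots> = (\<Sum>k\<le>M. coeff p k * x^k)"
    by (rule sum.mono_neutral_left) (use assms in \<open>auto simp: coeff_eq_0\<close>)
  finally show ?thesis by (simp add: atMost_atLeast0)
qed

lemma P_poly_eq_prod: "1 \<le> m \<Longrightarrow> P_poly m = (\<Prod>j\<in>{2..m}. [: - ((real j)^2), 1 :])"
  unfolding P_poly_def by auto

lemma Q_poly_eq_mult_P_poly: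
  assumes "1 \<le> m"
  shows "Q_poly m = [:-1, 1:] * P_poly m"
proof -
  have "{1..m} = insert 1 {2..m}" using assms by auto
  then show ?thesis unfolding Q_poly_def P_poly_eq_prod[OF assms] by simp
qed

lemma degree_Q_poly: "degree (Q_poly m) \<le> m"
proof -
  have "degree (Q_poly m) \<le> sum (degree \<circ> (\<lambda>j. [: - ((real j)^2), 1 :])) {1..m}"
    unfolding Q_poly_def by (rule degree_prod_sum_le) simp
  then show ?thesis by simp
qed

lemma degree_P_poly:
  assumes "1 \<le> m"
  shows "degree (P_poly m) \<le> m - 1"
proof -
  have "degree (P_poly m) \<le> sum (degree \<circ> (\<lambda>j. [: - ((real j)^2), 1 :])) {2..m}"
    unfolding P_poly_eq_prod[OF assms] by (rule degree_prod_sum_le) simp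
  then show ?thesis by simp
qed

lemma poly_P_poly_1: "1 \<le> m \<Longrightarrow> poly (P_poly m) 1 = (\<Prod>j=2..m. 1 - (real j)^2)"
  by (simp add: P_poly_eq_prod poly_prod)

lemma S_poly_mult: "S_poly m * [:-1, 1:] = P_poly m - [:poly (P_poly m) 1:]"
proof -
  have "[:-1, 1:] dvd P_poly m - [:poly (P_poly m) 1:]"
    using poly_eq_0_iff_dvd[of "P_poly m - [:poly (P_poly m) 1:]" 1] by simp
  then show ?thesis unfolding S_poly_def by (rule dvd_div_mult_self)
qed

lemma poly_S_poly: "poly (S_poly m) x * (x - 1) = poly (P_poly m) x - poly (P_poly m) 1"
  using arg_cong[OF S_poly_mult[of m], of "\<lambda>p. poly p x"] by (simp add: algebra_simps)

lemma degree_S_poly: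
  assumes "2 \<le> m"
  shows "degree (S_poly m) \<le> m - 2"
proof (cases "S_poly m = 0")
  case False
  then have "degree (S_poly m * [:-1, 1:]) = degree (S_poly m) + 1"
    by (subst degree_mult_eq) auto
  moreover have "degree (P_poly m - [:poly (P_poly m) 1:]) \<le> m - 1"
    using degree_diff_le_max[of "P_poly m" "[:poly (P_poly m) 1:]"] degree_P_poly[of m] assms by auto
  ultimately show ?thesis using S_poly_mult[of m] assms by simp
qed simp

lemma poly_Q_poly_square_eq_0: "1 \<le> n \<Longrightarrow> n \<le> m \<Longrightarrow> poly (Q_poly m) ((real n)^2) = 0"
  unfolding Q_poly_def poly_prod by (intro prod_zero) (auto intro!: bexI[of _ n])

lemma poly_Q_poly_square_pos:
  assumes "m < n"
  shows "0 < poly (Q_poly m) ((real n)^2)"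
proof -
  have "(real j)^2 < (real n)^2" if "j \<in> {1..m}" for j
    using that assms by (auto intro!: power_strict_mono)
  then show ?thesis
    unfolding Q_poly_def poly_prod by (intro prod_pos) auto
qed

lemma Q_poly_as_sum:
  "(\<Sum>k=0..m. coeff (Q_poly m) k * (x^k * w)) = poly (Q_poly m) x * w"
  by (simp add: poly_as_sum_upto[OF degree_Q_poly] sum_distrib_right mult.assoc)

lemma Q_poly_as_P_poly_sum:
  assumes "1 \<le> m"
  shows "(\<Sum>k=0..m-1. coeff (P_poly m) k * (x^Suc k * w - x^k * w)) = poly (Q_poly m) x * w"
proof -
  have "(\<Sum>k=0..m-1. coeff (P_poly m) k * (x^Suc k * w - x^k * w)) =
          (x - 1) * w * (\<Sum>k=0..m-1. coeff (P_poly m) k * x^k)"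
    by (simp add: sum_distrib_left algebra_simps)
  also have "\<dots> = (x - 1) * w * poly (P_poly m) x"
    by (simp add: poly_as_sum_upto[OF degree_P_poly[OF assms]])
  also have "\<dots> = poly (Q_poly m) x * w"
    by (simp add: Q_poly_eq_mult_P_poly[OF assms] algebra_simps)
  finally show ?thesis .
qed

lemma Q_poly_as_S_poly_sum:
  assumes "2 \<le> m"
  shows "poly (P_poly m) 1 * (x^1 * w - x^0 * w) +
           (\<Sum>j=0..m-2. coeff (S_poly m) j * ((1 - x)^2 * (x^j * w))) = poly (Q_poly m) x * w"
proof -
  have "(\<Sum>j=0..m-2. coeff (S_poly m) j * ((1 - x)^2 * (x^j * w))) =
          (x - 1) * w * (poly (S_poly m) x * (x - 1))"
    by (simp add: poly_as_sum_upto[OF degree_S_poly[OF assms]] sum_distrib_left power2_eq_square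
        algebra_simps)
  also have "\<dots> = (x - 1) * w * (poly (P_poly m) x - poly (P_poly m) 1)"
    by (simp add: poly_S_poly)
  finally show ?thesis
    using assms by (simp add: Q_poly_eq_mult_P_poly algebra_simps)
qed

section \<open>Periodic \<open>C\<^sup>m\<close> functions of mean zero\<close>

context
  fixes m :: nat and f :: "real \<Rightarrow> real"
  assumes smooth: "C_m m f"
    and periodic: "periodic_fun_simple f (2*pi)"
    and mean_zero: "integral {0..2*pi} f = 0"
begin

declare funpow.simps(2) [simp del]

lemma higher_deriv_has_derivative:
  "k < m \<Longrightarrow> ((deriv ^^ k) f has_real_derivative (deriv ^^ Suc k) f x) (at x)"
  using smooth by (simp add: C_m_def)

lemma continuous_on_higher_deriv: "k \<le> m \<Longrightarrow> continuous_on UNIV ((deriv ^^ k) f)"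
  using smooth by (simp add: C_m_def)

lemma periodic_higher_deriv: "k \<le> m \<Longrightarrow> periodic_fun_simple ((deriv ^^ k) f) (2*pi)"
proof (induction k)
  case 0
  then show ?case using periodic by simp
next
  case (Suc k)
  then interpret periodic_fun_simple "(deriv ^^ k) f" "2*pi" by simp
  show ?case
  proof
    fix t
    have "((\<lambda>s. (deriv ^^ k) f (s + 2*pi)) has_real_derivative (deriv ^^ Suc k) f (t + 2*pi)) (at t)"
      using higher_deriv_has_derivative[of k "t + 2*pi"] Suc.prems by (simp add: DERIV_shift)
    then have "((deriv ^^ k) f has_real_derivative (deriv ^^ Suc k) f (t + 2*pi)) (at t)"
      by (simp add: plus_period)
    then show "(deriv ^^ Suc k) f (t + 2*pi) = (deriv ^^ Suc k) f t"
      using higher_deriv_has_derivative[of k t] Suc.prems DERIV_unique by auto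
  qed
qed

lemma
  assumes "k < m"
  shows fourier_cos_higher_deriv:
      "fourier_cos ((deriv ^^ Suc k) f) n = real n * fourier_sin ((deriv ^^ k) f) n"
    and fourier_sin_higher_deriv:
      "fourier_sin ((deriv ^^ Suc k) f) n = - real n * fourier_cos ((deriv ^^ k) f) n"
    and fourier_sq_higher_deriv_Suc:
      "fourier_sq ((deriv ^^ Suc k) f) n = (real n)^2 * fourier_sq ((deriv ^^ k) f) n"
proof -
  have "periodic_fun_simple ((deriv ^^ k) f) (2*pi)"
    "continuous_on UNIV ((deriv ^^ Suc k) f)"
    using assms by (intro periodic_higher_deriv continuous_on_higher_deriv; simp)+
  with higher_deriv_has_derivative[OF assms]
  show "fourier_cos ((deriv ^^ Suc k) f) n = real n * fourier_sin ((deriv ^^ k) f) n"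
    "fourier_sin ((deriv ^^ Suc k) f) n = - real n * fourier_cos ((deriv ^^ k) f) n"
    "fourier_sq ((deriv ^^ Suc k) f) n = (real n)^2 * fourier_sq ((deriv ^^ k) f) n"
    by (simp_all add: fourier_cos_deriv fourier_sin_deriv fourier_sq_deriv)
qed

lemma fourier_sq_higher_deriv:
  "k \<le> m \<Longrightarrow> fourier_sq ((deriv ^^ k) f) n = ((real n)^2)^k * fourier_sq f n"
  by (induction k) (simp_all add: fourier_sq_higher_deriv_Suc)

lemma integral_higher_deriv:
  assumes "k \<le> m"
  shows "integral {0..2*pi} ((deriv ^^ k) f) = 0"
proof (cases k)
  case (Suc j)
  then have "fourier_cos ((deriv ^^ k) f) 0 = 0"
    using fourier_cos_higher_deriv[of j 0] assms by simp
  then show ?thesis by (simp add: fourier_cos_0)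
qed (simp add: mean_zero)

lemma parseval_higher_deriv:
  assumes "k \<le> m"
  shows "(\<lambda>n. ((real n)^2)^k * fourier_sq f n) sums
           (pi * integral {0..2*pi} (\<lambda>t. ((deriv ^^ k) f t)^2))"
proof -
  have "fourier_sq ((deriv ^^ k) f) sums (pi * integral {0..2*pi} (\<lambda>t. ((deriv ^^ k) f t)^2))"
    using assms by (intro parseval periodic_higher_deriv continuous_on_higher_deriv integral_higher_deriv)
  moreover have "fourier_sq ((deriv ^^ k) f) = (\<lambda>n. ((real n)^2)^k * fourier_sq f n)"
    using fourier_sq_higher_deriv[OF assms] by auto
  ultimately show ?thesis by simp
qed

lemma parseval_higher_deriv_plus:
  assumes "k + 2 \<le> m"
  shows "(\<lambda>n. (1 - (real n)^2)^2 * (((real n)^2)^k * fourier_sq f n)) sums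
           (pi * integral {0..2*pi} (\<lambda>t. ((deriv ^^ Suc (Suc k)) f t + (deriv ^^ k) f t)^2))"
proof -
  let ?H = "\<lambda>t. (deriv ^^ Suc (Suc k)) f t + (deriv ^^ k) f t"
  have cont: "continuous_on UNIV ((deriv ^^ Suc (Suc k)) f)" "continuous_on UNIV ((deriv ^^ k) f)"
    using assms by (intro continuous_on_higher_deriv; simp)+
  have "periodic_fun_simple ?H (2*pi)"
    using periodic_higher_deriv[of "Suc (Suc k)"] periodic_higher_deriv[of k] assms
    by (simp add: periodic_fun_simple_def)
  moreover have "integral {0..2*pi} ?H = 0"
    using assms by (simp add: integral_add integrable_continuous_UNIV cont integral_higher_deriv)
  moreover have "fourier_sq ?H = (\<lambda>n. (1 - (real n)^2)^2 * (((real n)^2)^k * fourier_sq f n))"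
  proof
    fix n
    have "fourier_cos ?H n = (1 - (real n)^2) * fourier_cos ((deriv ^^ k) f) n"
      "fourier_sin ?H n = (1 - (real n)^2) * fourier_sin ((deriv ^^ k) f) n"
      using assms by (simp_all add: fourier_cos_add fourier_sin_add cont fourier_cos_higher_deriv
          fourier_sin_higher_deriv power2_eq_square algebra_simps)
    then have "fourier_sq ?H n = (1 - (real n)^2)^2 * fourier_sq ((deriv ^^ k) f) n"
      by (simp add: fourier_sq_def power_mult_distrib distrib_left)
    then show "fourier_sq ?H n = (1 - (real n)^2)^2 * (((real n)^2)^k * fourier_sq f n)"
      using fourier_sq_higher_deriv[of k n] assms by simp
  qed
  ultimately show ?thesis
    using parseval[of ?H] cont by (simp add: continuous_intros)
qed

lemma Q_form_sums:
  "(\<lambda>n. poly (Q_poly m) ((real n)^2) * fourier_sq f n) sums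
     (pi * (\<Sum>k=0..m. coeff (Q_poly m) k * integral {0..2*pi} (\<lambda>t. ((deriv ^^ k) f t)^2)))"
proof -
  have "(\<lambda>n. \<Sum>k=0..m. coeff (Q_poly m) k * (((real n)^2)^k * fourier_sq f n)) sums
          (\<Sum>k=0..m. coeff (Q_poly m) k * (pi * integral {0..2*pi} (\<lambda>t. ((deriv ^^ k) f t)^2)))"
    by (intro sums_sum sums_mult parseval_higher_deriv) auto
  then show ?thesis
    by (simp only: Q_poly_as_sum) (simp add: sum_distrib_left mult_ac)
qed

lemma P_form_sums:
  assumes "1 \<le> m"
  shows "(\<lambda>n. poly (Q_poly m) ((real n)^2) * fourier_sq f n) sums
     (pi * (\<Sum>k=0..m-1. coeff (P_poly m) k *
        integral {0..2*pi} (\<lambda>t. ((deriv ^^ Suc k) f t)^2 - ((deriv ^^ k) f t)^2)))"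
proof -
  let ?I = "\<lambda>k. integral {0..2*pi} (\<lambda>t. ((deriv ^^ k) f t)^2)"
  have "(\<lambda>n. \<Sum>k=0..m-1. coeff (P_poly m) k *
          (((real n)^2)^Suc k * fourier_sq f n - ((real n)^2)^k * fourier_sq f n)) sums
        (\<Sum>k=0..m-1. coeff (P_poly m) k * (pi * ?I (Suc k) - pi * ?I k))"
    using assms by (intro sums_sum sums_mult sums_diff parseval_higher_deriv) auto
  moreover have "?I (Suc k) - ?I k =
                   integral {0..2*pi} (\<lambda>t. ((deriv ^^ Suc k) f t)^2 - ((deriv ^^ k) f t)^2)"
    if "k \<in> {0..m-1}" for k
    using that assms
    by (subst integral_diff) (auto intro!: integrable_continuous_UNIV continuous_intros
        continuous_on_higher_deriv)
  ultimately show ?thesis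
    by (simp only: Q_poly_as_P_poly_sum[OF assms])
      (simp add: sum_distrib_left right_diff_distrib[symmetric] mult_ac)
qed

lemma S_form_sums:
  assumes "2 \<le> m"
  shows "(\<lambda>n. poly (Q_poly m) ((real n)^2) * fourier_sq f n) sums
     (pi * ((\<Prod>j=2..m. 1 - (real j)^2) *
              integral {0..2*pi} (\<lambda>t. (deriv f t)^2 - (f t)^2)
            + (\<Sum>k=1..m-1. coeff (S_poly m) (k - 1) *
              integral {0..2*pi} (\<lambda>t. ((deriv ^^ Suc k) f t + (deriv ^^ (k - 1)) f t)^2))))"
proof -
  let ?I = "\<lambda>k. integral {0..2*pi} (\<lambda>t. ((deriv ^^ k) f t)^2)"
  let ?J = "\<lambda>j. integral {0..2*pi} (\<lambda>t. ((deriv ^^ Suc (Suc j)) f t + (deriv ^^ j) f t)^2)"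
  have "(\<lambda>n. poly (P_poly m) 1 * (((real n)^2)^1 * fourier_sq f n - ((real n)^2)^0 * fourier_sq f n) +
           (\<Sum>j=0..m-2. coeff (S_poly m) j * ((1 - (real n)^2)^2 * (((real n)^2)^j * fourier_sq f n))))
        sums (poly (P_poly m) 1 * (pi * ?I 1 - pi * ?I 0) + (\<Sum>j=0..m-2. coeff (S_poly m) j * (pi * ?J j)))"
    using assms
    by (intro sums_add sums_mult sums_diff sums_sum parseval_higher_deriv parseval_higher_deriv_plus)
      auto
  moreover have "integral {0..2*pi} (\<lambda>t. (deriv f t)^2 - (f t)^2) = ?I 1 - ?I 0"
    using assms continuous_on_higher_deriv[of 1] continuous_on_higher_deriv[of 0]
    by (subst integral_diff) (auto intro!: integrable_continuous_UNIV continuous_intros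
        simp: funpow.simps(2))
  moreover have "(\<Sum>k=1..m-1. coeff (S_poly m) (k - 1) *
                  integral {0..2*pi} (\<lambda>t. ((deriv ^^ Suc k) f t + (deriv ^^ (k - 1)) f t)^2)) =
                 (\<Sum>j=0..m-2. coeff (S_poly m) j * ?J j)"
  proof -
    have "{1..m-1} = {Suc 0..Suc (m-2)}" using assms by auto
    then show ?thesis by (simp only: sum.shift_bounds_cl_Suc_ivl) simp
  qed
  ultimately show ?thesis
    using assms
    by (simp only: Q_poly_as_S_poly_sum[OF assms])
      (simp add: poly_P_poly_1 sum_distrib_left algebra_simps)
qed

lemma Q_form_nonneg_eq_0_iff:
  assumes "(\<lambda>n. poly (Q_poly m) ((real n)^2) * fourier_sq f n) sums s"
  shows "0 \<le> s \<and> (s = 0 \<longleftrightarrow> (\<forall>n>m. fourier_sq f n = 0))"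
proof -
  let ?T = "\<lambda>n. poly (Q_poly m) ((real n)^2) * fourier_sq f n"
  have W_0: "fourier_sq f 0 = 0"
    by (simp add: fourier_sq_0 mean_zero)
  have T_nonneg: "0 \<le> ?T n" for n
  proof (cases "n = 0")
    case False
    then have "0 \<le> poly (Q_poly m) ((real n)^2)"
      using poly_Q_poly_square_eq_0[of n m] poly_Q_poly_square_pos[of m n] by force
    then show ?thesis by (simp add: fourier_sq_nonneg)
  qed (simp add: W_0)
  have "(\<forall>n. ?T n = 0) \<longleftrightarrow> (\<forall>n>m. fourier_sq f n = 0)"
  proof
    assume "\<forall>n. ?T n = 0"
    then show "\<forall>n>m. fourier_sq f n = 0"
      using poly_Q_poly_square_pos by (metis less_irrefl mult_eq_0_iff)
  next
    assume high: "\<forall>n>m. fourier_sq f n = 0"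
    show "\<forall>n. ?T n = 0"
    proof
      fix n
      consider "n = 0" | "1 \<le> n" "n \<le> m" | "m < n" by linarith
      then show "?T n = 0"
        by cases (simp_all add: W_0 poly_Q_poly_square_eq_0 high)
    qed
  qed
  moreover have "s = suminf ?T" "summable ?T"
    using assms by (simp_all add: sums_unique sums_summable)
  ultimately show ?thesis
    using suminf_nonneg[OF _ T_nonneg] suminf_eq_zero_iff[OF _ T_nonneg] by simp
qed

end

theorem proposition2p1:
  fixes m :: nat and f :: "real \<Rightarrow> real"
  assumes m_pos: "m \<ge> 1"
    and smooth: "C_m m f"
    and periodic: "\<forall>t. f (t + 2 * pi) = f t"
    and mean_zero: "integral {0..2 * pi} f = 0"
  defines "A \<equiv> (\<Sum>k=0..m. coeff (Q_poly m) k *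
                   integral {0..2 * pi} (\<lambda>t. ((deriv ^^ k) f t)^2))"
    and "B \<equiv> (\<Sum>k=0..m-1. coeff (P_poly m) k *
                   integral {0..2 * pi} (\<lambda>t. ((deriv ^^ Suc k) f t)^2 - ((deriv ^^ k) f t)^2))"
    and "C \<equiv> (\<Prod>j=2..m. 1 - (real j)^2) *
                 integral {0..2 * pi} (\<lambda>t. (deriv f t)^2 - (f t)^2)
             + (\<Sum>k=1..m-1. coeff (S_poly m) (k - 1) *
                 integral {0..2 * pi} (\<lambda>t. ((deriv ^^ Suc k) f t + (deriv ^^ (k - 1)) f t)^2))"
    and "E \<equiv> (\<exists>\<alpha> \<beta> :: nat \<Rightarrow> real. \<forall>t.
                 f t = (\<Sum>n=1..m. \<alpha> n * cos (real n * t) + \<beta> n * sin (real n * t)))"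
  shows "0 \<le> A \<and> 0 \<le> B \<and> (m \<ge> 2 \<longrightarrow> 0 \<le> C)
         \<and> (A = 0 \<longleftrightarrow> E) \<and> (B = 0 \<longleftrightarrow> E) \<and> (m \<ge> 2 \<longrightarrow> (C = 0 \<longleftrightarrow> E))"
proof -
  have per: "periodic_fun_simple f (2*pi)"
    using periodic by (simp add: periodic_fun_simple_def)
  have cont: "continuous_on UNIV f"
    using continuous_on_higher_deriv[OF smooth per mean_zero, of 0] by simp
  let ?T = "\<lambda>n. poly (Q_poly m) ((real n)^2) * fourier_sq f n"
  have sums_A: "?T sums (pi * A)"
    unfolding A_def by (rule Q_form_sums[OF smooth per mean_zero])
  have "?T sums (pi * B)"
    unfolding B_def by (rule P_form_sums[OF smooth per mean_zero m_pos])
  then have B_eq_A: "B = A"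
    by (auto dest: sums_unique2[OF sums_A])
  have C_eq_A: "C = A" if "m \<ge> 2"
    using S_form_sums[OF smooth per mean_zero that] unfolding C_def
    by (auto dest: sums_unique2[OF sums_A])
  have "0 \<le> pi * A \<and> (pi * A = 0 \<longleftrightarrow> (\<forall>n>m. fourier_sq f n = 0))"
    by (rule Q_form_nonneg_eq_0_iff[OF smooth per mean_zero sums_A])
  moreover have "(\<forall>n>m. fourier_sq f n = 0) \<longleftrightarrow> E"
    unfolding E_def by (rule harmonics_upto_iff_fourier_sq_eq_0[OF per cont mean_zero, symmetric])
  ultimately show ?thesis
    using B_eq_A C_eq_A pi_gt_zero by (auto simp: zero_le_mult_iff)
qed

end
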